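(* Let $G_L\le GL(7,\mathbb{C})$ be the group generated by the permutation matrices $(12),(23),(34),(67)$ and the matrix $A$ defined in the context. Then $G_L$ is isomorphic to the Coxeter group $W(D_5)$, which has order $1920$.
   Context: A permutation $\sigma\in S_7$ is identified with the $7\times7$ permutation matrix sending the standard basis vector $e_i$ to $e_{\sigma(i)}$. The matrix $A\in GL(7,\mathbb{C})$ is \[ A=\begin{pmatrix} 1&0&0&0&0&0&0\\ 0&1&0&0&0&0&0\\ 0&0&-1&0&0&0&1\\ 0&0&0&-1&0&0&1\\ 0&0&-1&-1&1&0&1\\ 0&0&-1&-1&0&1&1\\ 0&0&0&0&0&0&1 \end{pmatrix}. \] $W(D_5)$ denotes the Coxeter group of type $D_5$. *)

theory Defs
  imports "Jordan_Normal_Form.Matrix" "HOL-Algebra.Generated_Groups"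
begin

definition GL_grp :: "nat \<Rightarrow> ('a::comm_ring_1) mat monoid" where
  "GL_grp n = \<lparr>carrier = {M \<in> carrier_mat n n. invertible_mat M},
               mult = (\<lambda>M N. M * N), one = 1\<^sub>m n\<rparr>"

definition gen_subgroup :: "nat \<Rightarrow> ('a::comm_ring_1) mat set \<Rightarrow> 'a mat monoid" where
  "gen_subgroup n S = (GL_grp n)\<lparr>carrier := generate (GL_grp n) S\<rparr>"

text \<open>Permutation matrix of sigma (indices 0..n-1 stand for 1..n): e_i is sent to e_(sigma i).\<close>
definition perm_matrix :: "nat \<Rightarrow> (nat \<Rightarrow> nat) \<Rightarrow> complex mat" where
  "perm_matrix n \<sigma> = mat n n (\<lambda>(r, c). if r = \<sigma> c then 1 else 0)"

definition A_mat :: "complex mat" where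
  "A_mat = mat_of_rows_list 7
    [[1, 0, 0, 0, 0, 0, 0],
     [0, 1, 0, 0, 0, 0, 0],
     [0, 0, -1, 0, 0, 0, 1],
     [0, 0, 0, -1, 0, 0, 1],
     [0, 0, -1, -1, 1, 0, 1],
     [0, 0, -1, -1, 0, 1, 1],
     [0, 0, 0, 0, 0, 0, 1]]"

text \<open>G_L = < (12), (23), (34), (67), A > inside GL(7,C) (0-based indices).\<close>
definition G_L :: "complex mat monoid" where
  "G_L = gen_subgroup 7
     {perm_matrix 7 (Transposition.transpose 0 1), perm_matrix 7 (Transposition.transpose 1 2),
      perm_matrix 7 (Transposition.transpose 2 3), perm_matrix 7 (Transposition.transpose 5 6),
      A_mat}"

definition roots_D :: "nat \<Rightarrow> real vec set" where
  "roots_D n = {v. \<exists>i j a b. i < n \<and> j < n \<and> i \<noteq> j \<and> a \<in> {-1, 1} \<and> b \<in> {-1, 1} \<and>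
       v = vec n (\<lambda>k. if k = i then a else if k = j then b else 0)}"

definition reflection_mat :: "nat \<Rightarrow> real vec \<Rightarrow> real mat" where
  "reflection_mat n \<alpha> = 1\<^sub>m n - (2 / (\<alpha> \<bullet> \<alpha>)) \<cdot>\<^sub>m mat n n (\<lambda>(r, c). \<alpha> $ r * \<alpha> $ c)"

definition W_D :: "nat \<Rightarrow> real mat monoid" where
  "W_D n = gen_subgroup n (reflection_mat n ` roots_D n)"

end

theory Submission
  imports Defs "HOL-Combinatorics.Permutations"
begin

text \<open>
  The Weyl group W(D_n) is generated by the reflections in the roots \<open>\<plusminus>e\<^sub>i \<plusminus> e\<^sub>j\<close>; these are
  exactly the signed transposition matrices, and they generate the group of signed permutation
  matrices with an even number of minus signs, of order \<open>n! 2\<^sup>n\<^sup>-\<^sup>1\<close> (1920 for n = 5).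
  The same group is already generated by five of its elements, and conjugating the block matrix
  \<open>diag(W, 1, 1)\<close> by a suitable invertible 7 \<times> 7 matrix Q turns these five elements into the
  generators (12), (23), (34), (67), A of \<open>G\<^sub>L\<close>. Conjugation by Q composed with the block embedding
  is an injective homomorphism, so it maps W(D_5) isomorphically onto the group it generates.
\<close>

lemma permutes_lessThan_less: "p permutes {..<n} \<Longrightarrow> c < n \<Longrightarrow> p c < n"
  using permutes_in_image by fastforce

lemma permutes_two_points:
  assumes "a \<in> A" "b \<in> A" "a \<noteq> b" "x \<in> A" "y \<in> A" "x \<noteq> y"
  obtains p where "p permutes A" "p a = x" "p b = y"
proof
  let ?b' = "Transposition.transpose a x b"
  show "Transposition.transpose ?b' y \<circ> Transposition.transpose a x permutes A"
    using assms by (intro permutes_compose permutes_swap_id) (auto simp: transpose_def)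
  show "(Transposition.transpose ?b' y \<circ> Transposition.transpose a x) a = x"
    using assms by (auto simp: transpose_def)
  show "(Transposition.transpose ?b' y \<circ> Transposition.transpose a x) b = y"
    by simp
qed

lemma prod_signs:
  assumes "\<And>k. k \<in> A \<Longrightarrow> f k \<in> {-1, 1 :: real}"
  shows "prod f A \<in> {-1, 1}"
proof -
  have "\<bar>prod f A\<bar> = 1"
    unfolding abs_prod using assms by (intro prod.neutral) fastforce
  then show ?thesis by auto
qed

lemma conjugate_in_subgroup:
  assumes G: "group G" and H: "subgroup H G" and "x \<in> H" "a \<in> H" "b \<in> carrier G"
    and "x \<otimes>\<^bsub>G\<^esub> a = b \<otimes>\<^bsub>G\<^esub> x"
  shows "b \<in> H"
proof -
  have "b = x \<otimes>\<^bsub>G\<^esub> a \<otimes>\<^bsub>G\<^esub> inv\<^bsub>G\<^esub> x"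
    using assms(3-6) subgroup.subset[OF H]
    by (subst group.inv_solve_right[OF G]) (auto intro: monoid.m_closed[OF group.is_monoid[OF G]])
  moreover have "x \<otimes>\<^bsub>G\<^esub> a \<otimes>\<^bsub>G\<^esub> inv\<^bsub>G\<^esub> x \<in> H"
    using assms(3,4) by (simp add: H subgroup.m_closed subgroup.m_inv_closed G)
  ultimately show ?thesis by simp
qed

lemma GL_grp_eq_units_of: "GL_grp n = units_of (ring_mat TYPE('a::comm_ring_1) n b)"
proof -
  have "invertible_mat M \<longleftrightarrow> (\<exists>B\<in>carrier_mat n n. B * M = 1\<^sub>m n \<and> M * B = 1\<^sub>m n)"
    if M: "M \<in> carrier_mat n n" for M :: "'a mat"
  proof
    assume "invertible_mat M"
    then obtain B where "M * B = 1\<^sub>m n" "B * M = 1\<^sub>m (dim_row B)"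
      using M unfolding invertible_mat_def inverts_mat_def by auto
    moreover from this have "B \<in> carrier_mat n n"
      using M by (metis carrier_matD carrier_matI index_mult_mat(2,3) index_one_mat(2,3))
    ultimately show "\<exists>B\<in>carrier_mat n n. B * M = 1\<^sub>m n \<and> M * B = 1\<^sub>m n" by auto
  qed (use M in \<open>auto simp: invertible_mat_def inverts_mat_def\<close>)
  then show ?thesis
    by (auto simp: GL_grp_def units_of_def Units_def ring_mat_def)
qed

lemma GL_grp_carrier_iff:
  "M \<in> carrier (GL_grp n) \<longleftrightarrow>
     M \<in> carrier_mat n n \<and> (\<exists>B\<in>carrier_mat n n. B * M = 1\<^sub>m n \<and> M * B = 1\<^sub>m n)"
  by (simp add: GL_grp_eq_units_of[where b = "()"] units_of_def Units_def ring_mat_def)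

lemma GL_grp_is_group: "group (GL_grp n :: 'a::comm_ring_1 mat monoid)"
  unfolding GL_grp_eq_units_of[where b = "()"]
  by (rule monoid.units_group) (rule semiring.axioms(2)[OF semiring_mat])

lemma GL_grp_mult [simp]: "x \<otimes>\<^bsub>GL_grp n\<^esub> y = x * y"
  and GL_grp_one [simp]: "\<one>\<^bsub>GL_grp n\<^esub> = 1\<^sub>m n"
  by (simp_all add: GL_grp_def)

lemma gen_subgroup_is_group: "S \<subseteq> carrier (GL_grp n) \<Longrightarrow> group (gen_subgroup n S)"
  unfolding gen_subgroup_def
  by (intro group.subgroup_imp_group[OF GL_grp_is_group] group.generate_is_subgroup[OF GL_grp_is_group])

lemma gen_subgroup_image_iso:
  assumes h: "h \<in> hom (GL_grp n) (GL_grp m)" and inj: "inj_on h (carrier (GL_grp n))"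
    and S: "S \<subseteq> carrier (GL_grp n)"
  shows "h \<in> iso (gen_subgroup n S) (gen_subgroup m (h ` S))"
proof -
  have "group_hom (GL_grp n) (GL_grp m) h"
    using h by (simp add: group_hom_def group_hom_axioms_def GL_grp_is_group)
  then have gen: "generate (GL_grp m) (h ` S) = h ` generate (GL_grp n) S"
    by (rule group_hom.generate_img[OF _ S])
  have sub: "generate (GL_grp n) S \<subseteq> carrier (GL_grp n)"
    by (rule group.generate_incl[OF GL_grp_is_group S])
  show ?thesis
  proof (rule isoI)
    show "h \<in> hom (gen_subgroup n S) (gen_subgroup m (h ` S))"
    proof (rule homI)
      fix x assume "x \<in> carrier (gen_subgroup n S)"
      then show "h x \<in> carrier (gen_subgroup m (h ` S))" using gen by (simp add: gen_subgroup_def)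
    next
      fix x y assume "x \<in> carrier (gen_subgroup n S)" "y \<in> carrier (gen_subgroup n S)"
      then have "x \<in> carrier (GL_grp n)" "y \<in> carrier (GL_grp n)" using sub by (auto simp: gen_subgroup_def)
      then show "h (x \<otimes>\<^bsub>gen_subgroup n S\<^esub> y) = h x \<otimes>\<^bsub>gen_subgroup m (h ` S)\<^esub> h y"
        using hom_mult[OF h] by (simp add: gen_subgroup_def)
    qed
    show "bij_betw h (carrier (gen_subgroup n S)) (carrier (gen_subgroup m (h ` S)))"
      using inj_on_subset[OF inj sub] gen by (simp add: gen_subgroup_def bij_betw_def)
  qed
qed

section \<open>Signed permutation matrices\<close>

definition signed_perm_mat :: "nat \<Rightarrow> (nat \<Rightarrow> nat) \<Rightarrow> (nat \<Rightarrow> 'a::semiring_1) \<Rightarrow> 'a mat" where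
  "signed_perm_mat n p s = mat n n (\<lambda>(r, c). if r = p c then s c else 0)"

lemma signed_perm_mat_carrier [simp]: "signed_perm_mat n p s \<in> carrier_mat n n"
  by (simp add: signed_perm_mat_def)

lemma dim_signed_perm_mat [simp]:
  "dim_row (signed_perm_mat n p s) = n" "dim_col (signed_perm_mat n p s) = n"
  by (simp_all add: signed_perm_mat_def)

lemma index_signed_perm_mat [simp]:
  "r < n \<Longrightarrow> c < n \<Longrightarrow> signed_perm_mat n p s $$ (r, c) = (if r = p c then s c else 0)"
  by (simp add: signed_perm_mat_def)

lemma signed_perm_mat_cong:
  "(\<And>c. c < n \<Longrightarrow> p c = p' c \<and> s c = s' c) \<Longrightarrow> signed_perm_mat n p s = signed_perm_mat n p' s'"
  unfolding signed_perm_mat_def by (intro eq_matI) auto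

lemma signed_perm_mat_id: "signed_perm_mat n id (\<lambda>_. 1) = 1\<^sub>m n"
  by (intro eq_matI) auto

lemma signed_perm_mat_mult:
  assumes "\<And>c. c < n \<Longrightarrow> q c < n"
  shows "signed_perm_mat n p s * signed_perm_mat n q t = signed_perm_mat n (p \<circ> q) (\<lambda>c. s (q c) * t c)"
proof (rule eq_matI)
  fix i j assume "i < dim_row (signed_perm_mat n (p \<circ> q) (\<lambda>c. s (q c) * t c))"
    and "j < dim_col (signed_perm_mat n (p \<circ> q) (\<lambda>c. s (q c) * t c))"
  then have ij: "i < n" "j < n" by auto
  have "(signed_perm_mat n p s * signed_perm_mat n q t) $$ (i, j)
      = (\<Sum>k\<in>{0..<n}. (if i = p k then s k else 0) * (if k = q j then t j else 0))"
    using ij by (auto simp: scalar_prod_def intro: sum.cong)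
  also have "\<dots> = (\<Sum>k\<in>{0..<n}. if k = q j then (if i = p k then s k else 0) * t j else 0)"
    by (intro sum.cong) auto
  also have "\<dots> = signed_perm_mat n (p \<circ> q) (\<lambda>c. s (q c) * t c) $$ (i, j)"
    using ij assms[of j] by simp
  finally show "(signed_perm_mat n p s * signed_perm_mat n q t) $$ (i, j) = \<dots>" .
qed auto

text \<open>
  Sign vectors are normalised to 1 outside the index range, so that a signed permutation matrix
  determines its permutation and its signs (\<open>signed_perm_mat_inj\<close>).
\<close>
definition even_signs :: "nat \<Rightarrow> (nat \<Rightarrow> real) set" where
  "even_signs n = {s. (\<forall>i<n. s i \<in> {-1, 1}) \<and> (\<forall>i\<ge>n. s i = 1) \<and> prod s {..<n} = 1}"

definition even_signed_perms :: "nat \<Rightarrow> real mat set" where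
  "even_signed_perms n = {signed_perm_mat n p s |p s. p permutes {..<n} \<and> s \<in> even_signs n}"

lemma one_even_signs: "(\<lambda>_. 1) \<in> even_signs n"
  by (simp add: even_signs_def)

lemma even_signs_square: "s \<in> even_signs n \<Longrightarrow> c < n \<Longrightarrow> s c * s c = 1"
  by (auto simp: even_signs_def)

lemma even_signs_mult:
  assumes p: "p permutes {..<n}" and s: "s \<in> even_signs n" and t: "t \<in> even_signs n"
  shows "(\<lambda>c. s (p c) * t c) \<in> even_signs n"
proof -
  have "s (p i) * t i \<in> {-1, 1}" if "i < n" for i
  proof -
    have "s (p i) \<in> {-1, 1}" "t i \<in> {-1, 1}"
      using that s t permutes_lessThan_less[OF p] by (simp_all add: even_signs_def)
    then show ?thesis by auto
  qed
  moreover have "s (p i) * t i = 1" if "n \<le> i" for i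
    using that s t permutes_not_in[OF p] by (simp add: even_signs_def)
  moreover have "prod (\<lambda>c. s (p c) * t c) {..<n} = 1"
    using prod.permute[OF p, of s] s t by (simp add: even_signs_def prod.distrib o_def)
  ultimately show ?thesis by (simp add: even_signs_def)
qed

lemma even_signs_comp: "q permutes {..<n} \<Longrightarrow> s \<in> even_signs n \<Longrightarrow> s \<circ> q \<in> even_signs n"
  using even_signs_mult[OF _ _ one_even_signs] by (simp add: o_def)

lemma signed_perm_mat_inverse:
  assumes p: "p permutes {..<n}" and s: "s \<in> even_signs n"
  shows "signed_perm_mat n p s * signed_perm_mat n (inv_into UNIV p) (s \<circ> inv_into UNIV p) = 1\<^sub>m n"
    and "signed_perm_mat n (inv_into UNIV p) (s \<circ> inv_into UNIV p) * signed_perm_mat n p s = 1\<^sub>m n"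
proof -
  have q: "inv_into UNIV p permutes {..<n}" using permutes_inv[OF p] .
  show "signed_perm_mat n p s * signed_perm_mat n (inv_into UNIV p) (s \<circ> inv_into UNIV p) = 1\<^sub>m n"
    unfolding signed_perm_mat_id[symmetric]
    using permutes_lessThan_less[OF q] permutes_inverses[OF p] even_signs_square[OF s]
    by (subst signed_perm_mat_mult) (auto intro!: signed_perm_mat_cong)
  show "signed_perm_mat n (inv_into UNIV p) (s \<circ> inv_into UNIV p) * signed_perm_mat n p s = 1\<^sub>m n"
    unfolding signed_perm_mat_id[symmetric]
    using permutes_lessThan_less[OF p] permutes_inverses[OF p] even_signs_square[OF s]
    by (subst signed_perm_mat_mult) (auto intro!: signed_perm_mat_cong)
qed

lemma signed_perm_mat_inj:
  assumes p: "p permutes {..<n}" and q: "q permutes {..<n}"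
    and s: "s \<in> even_signs n" and t: "t \<in> even_signs n"
    and eq: "signed_perm_mat n p s = signed_perm_mat n q t"
  shows "p = q \<and> s = t"
proof -
  have "p c = q c \<and> s c = t c" if c: "c < n" for c
  proof -
    have pc: "p c < n" using permutes_lessThan_less[OF p c] .
    have "s c \<noteq> 0" using s c by (auto simp: even_signs_def)
    then have "p c = q c"
      using arg_cong[OF eq, of "\<lambda>M. M $$ (p c, c)"] pc c by (simp split: if_splits)
    then show ?thesis
      using arg_cong[OF eq, of "\<lambda>M. M $$ (p c, c)"] pc c by simp
  qed
  moreover have "p c = q c \<and> s c = t c" if "\<not> c < n" for c
    using that permutes_not_in[OF p] permutes_not_in[OF q] s t by (auto simp: even_signs_def)
  ultimately show ?thesis by (metis ext)
qed

lemma even_signed_perms_subgroup: "subgroup (even_signed_perms n) (GL_grp n)"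
proof (rule group.subgroupI[OF GL_grp_is_group])
  show "even_signed_perms n \<noteq> {}"
    using permutes_id one_even_signs unfolding even_signed_perms_def by blast
next
  show sub: "even_signed_perms n \<subseteq> carrier (GL_grp n)"
  proof
    fix x assume "x \<in> even_signed_perms n"
    then obtain p s where x: "x = signed_perm_mat n p s" and p: "p permutes {..<n}" and s: "s \<in> even_signs n"
      unfolding even_signed_perms_def by auto
    show "x \<in> carrier (GL_grp n)"
      unfolding GL_grp_carrier_iff x using signed_perm_mat_inverse(1,2)[OF p s]
      by (auto intro!: bexI[OF _ signed_perm_mat_carrier])
  qed
  fix x assume "x \<in> even_signed_perms n"
  then obtain p s where x: "x = signed_perm_mat n p s" and p: "p permutes {..<n}" and s: "s \<in> even_signs n"
    unfolding even_signed_perms_def by auto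
  let ?y = "signed_perm_mat n (inv_into UNIV p) (s \<circ> inv_into UNIV p)"
  have y: "?y \<in> even_signed_perms n"
    using permutes_inv[OF p] even_signs_comp[OF permutes_inv[OF p] s] unfolding even_signed_perms_def by blast
  have "inv\<^bsub>GL_grp n\<^esub> x = ?y"
    using sub x y \<open>x \<in> even_signed_perms n\<close> signed_perm_mat_inverse(2)[OF p s]
    by (intro group.inv_equality[OF GL_grp_is_group]) auto
  then show "inv\<^bsub>GL_grp n\<^esub> x \<in> even_signed_perms n" using y by simp
next
  fix x y assume "x \<in> even_signed_perms n" "y \<in> even_signed_perms n"
  then obtain p s q t where x: "x = signed_perm_mat n p s" and p: "p permutes {..<n}" and s: "s \<in> even_signs n"
    and y: "y = signed_perm_mat n q t" and q: "q permutes {..<n}" and t: "t \<in> even_signs n"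
    unfolding even_signed_perms_def by auto
  have "x * y = signed_perm_mat n (p \<circ> q) (\<lambda>c. s (q c) * t c)"
    unfolding x y using permutes_lessThan_less[OF q] by (rule signed_perm_mat_mult)
  then show "x \<otimes>\<^bsub>GL_grp n\<^esub> y \<in> even_signed_perms n"
    using permutes_compose[OF q p] even_signs_mult[OF q s t] unfolding even_signed_perms_def by auto
qed

lemma card_even_signs:
  assumes "0 < n"
  shows "card (even_signs n) = 2 ^ (n - 1)"
proof -
  define m where "m = n - 1"
  have n: "n = Suc m" using assms by (simp add: m_def)
  define PM where "PM = PiE {..<m} (\<lambda>_. {-1, 1 :: real})"
  \<comment> \<open>the last sign is the product of the others\<close>
  define extend where "extend f = (\<lambda>k. if k < m then f k else if k = m then prod f {..<m} else 1)" for f :: "nat \<Rightarrow> real"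
  have "extend ` PM = even_signs n"
  proof (intro equalityI subsetI)
    fix s assume "s \<in> extend ` PM"
    then obtain f where f: "f \<in> PM" and s: "s = extend f" by auto
    have "prod f {..<m} \<in> {-1, 1}" using f by (intro prod_signs) (auto simp: PM_def)
    moreover have "prod s {..<m} = prod f {..<m}" unfolding s extend_def by (intro prod.cong) auto
    ultimately show "s \<in> even_signs n"
      using f by (auto simp: even_signs_def n s extend_def PM_def PiE_iff less_Suc_eq)
  next
    fix s assume s: "s \<in> even_signs n"
    have "prod s {..<m} * s m = 1" "s m * s m = 1"
      using s even_signs_square[OF s, of m] by (auto simp: even_signs_def n)
    then have "s m = prod s {..<m}" by (metis mult.assoc mult_1_left mult_1_right)
    then have "s = extend (restrict s {..<m})"
      using s by (auto simp: extend_def even_signs_def n fun_eq_iff)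
    moreover have "restrict s {..<m} \<in> PM" using s by (auto simp: PM_def even_signs_def n)
    ultimately show "s \<in> extend ` PM" by blast
  qed
  moreover have "inj_on extend PM"
  proof (rule inj_onI)
    fix f g assume f: "f \<in> PM" and g: "g \<in> PM" and eq: "extend f = extend g"
    have "f k = g k" if "k < m" for k
      using fun_cong[OF eq, of k] that by (simp add: extend_def)
    then show "f = g" using f g unfolding PM_def by (intro PiE_ext) auto
  qed
  ultimately have "card (even_signs n) = card PM" using card_image by metis
  then show ?thesis by (simp add: PM_def card_PiE m_def numeral_2_eq_2)
qed

lemma card_even_signed_perms:
  assumes "0 < n"
  shows "card (even_signed_perms n) = fact n * 2 ^ (n - 1)"
proof -
  let ?P = "{p. p permutes {..<n}}"
  have "even_signed_perms n = (\<lambda>(p, s). signed_perm_mat n p s) ` (?P \<times> even_signs n)"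
    unfolding even_signed_perms_def by auto
  moreover have "inj_on (\<lambda>(p, s). signed_perm_mat n p s) (?P \<times> even_signs n)"
    using signed_perm_mat_inj by (auto intro!: inj_onI)
  ultimately have "card (even_signed_perms n) = card ?P * card (even_signs n)"
    by (simp add: card_image card_cartesian_product)
  then show ?thesis using card_permutations[of "{..<n}" n] card_even_signs[OF assms] by simp
qed

section \<open>The reflection group of type D\<close>

definition signed_transp_mat :: "nat \<Rightarrow> nat \<Rightarrow> nat \<Rightarrow> 'a \<Rightarrow> 'a::semiring_1 mat" where
  "signed_transp_mat n i j c =
     signed_perm_mat n (Transposition.transpose i j) (\<lambda>k. if k = i \<or> k = j then c else 1)"

definition signed_transps :: "nat \<Rightarrow> real mat set" where
  "signed_transps n = {signed_transp_mat n i j c |i j c. i < n \<and> j < n \<and> i \<noteq> j \<and> c \<in> {-1, 1}}"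

lemma signed_transp_mat_commute: "signed_transp_mat n j i c = signed_transp_mat n i j c"
  unfolding signed_transp_mat_def by (simp add: transpose_commute disj_commute)

lemma signed_transp_mat_one:
  "signed_transp_mat n i j 1 = signed_perm_mat n (Transposition.transpose i j) (\<lambda>_. 1)"
  by (simp add: signed_transp_mat_def)

lemma reflection_mat_root:
  assumes ij: "i < n" "j < n" "i \<noteq> j" and ab: "a \<in> {-1, 1}" "b \<in> {-1, 1}"
  shows "reflection_mat n (vec n (\<lambda>k. if k = i then a else if k = j then b else 0))
    = signed_transp_mat n i j (- (a * b))"
proof -
  let ?v = "vec n (\<lambda>k. if k = i then a else if k = j then b else 0)"
  have "?v \<bullet> ?v = (\<Sum>k\<in>{0..<n}. of_bool (k = i) + of_bool (k = j))"
    unfolding scalar_prod_def using ij ab by (intro sum.cong) auto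
  also have "\<dots> = 2" using ij by (simp add: sum.distrib)
  finally have "?v \<bullet> ?v = 2" .
  then show ?thesis
    unfolding reflection_mat_def signed_transp_mat_def
    using ij ab by (intro eq_matI) (auto simp: transpose_def)
qed

lemma reflections_roots_D: "reflection_mat n ` roots_D n = signed_transps n"
proof (intro equalityI subsetI)
  fix x assume "x \<in> reflection_mat n ` roots_D n"
  then obtain i j a b where "i < n" "j < n" "i \<noteq> j" "a \<in> {-1, 1}" "b \<in> {-1, 1}"
    and "x = reflection_mat n (vec n (\<lambda>k. if k = i then a else if k = j then b else 0))"
    unfolding roots_D_def by blast
  moreover from this have "- (a * b) \<in> {-1, 1}" and "x = signed_transp_mat n i j (- (a * b))"
    by (auto simp: reflection_mat_root)
  ultimately show "x \<in> signed_transps n"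
    unfolding signed_transps_def by blast
next
  fix x assume "x \<in> signed_transps n"
  then obtain i j c where ij: "i < n" "j < n" "i \<noteq> j" and c: "c \<in> {-1, 1}"
    and x: "x = signed_transp_mat n i j c"
    unfolding signed_transps_def by blast
  let ?v = "vec n (\<lambda>k. if k = i then 1 else if k = j then - c else 0)"
  have "?v \<in> roots_D n" unfolding roots_D_def using ij c by (intro CollectI exI[of _ i] exI[of _ j] exI[of _ 1] exI[of _ "- c"]) auto
  moreover have "x = reflection_mat n ?v" using reflection_mat_root[OF ij, of 1 "- c"] c x by auto
  ultimately show "x \<in> reflection_mat n ` roots_D n" by blast
qed

lemma pair_signs_even:
  assumes ij: "i < n" "j < n" "i \<noteq> j" and c: "c \<in> {-1, 1}"
  shows "(\<lambda>k. if k = i \<or> k = j then c else 1) \<in> even_signs n"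
proof -
  have "{k. k < n \<and> (k = i \<or> k = j)} = {i, j}" using ij by auto
  then have "prod (\<lambda>k. if k = i \<or> k = j then c else 1) {..<n} = c * c"
    using ij by (simp add: prod.If_cases Int_def)
  then show ?thesis using ij c by (auto simp: even_signs_def)
qed

lemma signed_transps_subset: "signed_transps n \<subseteq> even_signed_perms n"
proof
  fix x assume "x \<in> signed_transps n"
  then obtain i j c where ij: "i < n" "j < n" "i \<noteq> j" and c: "c \<in> {-1, 1}"
    and x: "x = signed_transp_mat n i j c"
    unfolding signed_transps_def by blast
  have "Transposition.transpose i j permutes {..<n}" using ij by (intro permutes_swap_id) auto
  then show "x \<in> even_signed_perms n"
    using pair_signs_even[OF ij c] unfolding x signed_transp_mat_def even_signed_perms_def by blast
qed

lemma signed_transps_GL: "signed_transps n \<subseteq> carrier (GL_grp n)"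
  using signed_transps_subset subgroup.subset[OF even_signed_perms_subgroup] by blast

lemma signed_transp_mat_GL:
  fixes c :: real
  assumes "i < n" "j < n" "i \<noteq> j" "c \<in> {-1, 1}"
  shows "signed_transp_mat n i j c \<in> carrier (GL_grp n)"
proof -
  have "signed_transp_mat n i j c \<in> signed_transps n" unfolding signed_transps_def using assms by blast
  then show ?thesis using signed_transps_GL by blast
qed

lemma signed_transp_mat_conj:
  assumes p: "p permutes {..<n}" and "i < n" "j < n"
  shows "signed_perm_mat n p (\<lambda>_. 1) * signed_transp_mat n i j c
    = signed_transp_mat n (p i) (p j) c * signed_perm_mat n p (\<lambda>_. 1)"
proof -
  have "Transposition.transpose (p i) (p j) (p k) = p (Transposition.transpose i j k)" for k
    using permutes_bij[OF p] by (simp add: transpose_apply_commute permutes_inverses(2)[OF p])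
  moreover have "p k = p i \<longleftrightarrow> k = i" "p k = p j \<longleftrightarrow> k = j" for k
    using permutes_inj[OF p] by (auto dest: injD)
  ultimately show ?thesis
    unfolding signed_transp_mat_def using assms permutes_lessThan_less[OF p]
    by (simp add: signed_perm_mat_mult transpose_def cong: signed_perm_mat_cong)
qed

lemma perm_mat_in_subgroup:
  assumes H: "subgroup H (GL_grp n)"
    and transps: "\<And>a b. a < n \<Longrightarrow> b < n \<Longrightarrow> a \<noteq> b \<Longrightarrow> signed_transp_mat n a b 1 \<in> H"
    and p: "p permutes {..<n}"
  shows "signed_perm_mat n p (\<lambda>_. 1) \<in> H"
  using p finite_lessThan
proof (induction rule: permutes_induct)
  case id
  have "signed_perm_mat n id (\<lambda>_. 1) \<in> H"
    using subgroup.one_closed[OF H] by (simp add: signed_perm_mat_id)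
  then show ?case by (simp add: id_def)
next
  case (swap a b p)
  have "signed_perm_mat n (Transposition.transpose a b \<circ> p) (\<lambda>_. 1)
      = signed_transp_mat n a b 1 * signed_perm_mat n p (\<lambda>_. 1)"
    unfolding signed_transp_mat_def
    by (subst signed_perm_mat_mult) (auto simp: permutes_lessThan_less[OF swap.hyps(4)])
  moreover have "signed_transp_mat n a b 1 \<in> H"
    using swap.hyps(1-3) by (intro transps) auto
  ultimately show ?case
    using subgroup.m_closed[OF H _ swap.IH] by (metis GL_grp_mult)
qed

lemma even_signs_second_neg:
  assumes s: "s \<in> even_signs n" and i: "i < n" "s i = -1"
  shows "\<exists>j<n. j \<noteq> i \<and> s j = -1"
proof (rule ccontr)
  assume "\<not> ?thesis"
  then have "s k = 1" if "k < n" "k \<noteq> i" for k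
    using that s by (auto simp: even_signs_def)
  then have "prod s {..<n} = s i" using i by (simp add: prod.remove[of _ i] prod.neutral)
  then show False using i s by (simp add: even_signs_def)
qed

lemma signed_transp_mat_mult_neg:
  assumes "i < n" "j < n" "i \<noteq> j"
  shows "signed_transp_mat n i j 1 * signed_transp_mat n i j (-1)
    = signed_perm_mat n id (\<lambda>k. if k = i \<or> k = j then -1 else 1)"
  unfolding signed_transp_mat_def using assms
  by (subst signed_perm_mat_mult) (auto simp: transpose_def intro!: signed_perm_mat_cong)

lemma sign_diag_in_subgroup:
  assumes H: "subgroup H (GL_grp n)" and transps: "signed_transps n \<subseteq> H"
    and s: "s \<in> even_signs n"
  shows "signed_perm_mat n id s \<in> H"
  using s
proof (induction "card {k. k < n \<and> s k = -1}" arbitrary: s rule: less_induct)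
  case less
  let ?neg = "\<lambda>s. {k. k < n \<and> s k = (-1 :: real)}"
  show ?case
  proof (cases "?neg s = {}")
    case True
    then have "signed_perm_mat n id s = 1\<^sub>m n"
      using less.prems unfolding signed_perm_mat_id[symmetric]
      by (intro signed_perm_mat_cong) (auto simp: even_signs_def)
    then show ?thesis using subgroup.one_closed[OF H] by simp
  next
    case False
    then obtain i where i: "i < n" "s i = -1" by auto
    then obtain j where j: "j < n" "j \<noteq> i" "s j = -1"
      using even_signs_second_neg[OF less.prems] by blast
    define d where "d = (\<lambda>k. if k = i \<or> k = j then -1 else 1 :: real)"
    define s' where "s' = (\<lambda>k. s k * d k)"
    have s': "s' \<in> even_signs n"
      using even_signs_mult[OF permutes_id less.prems pair_signs_even[OF j(1) i(1) j(2), of "-1"]]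
      by (simp add: s'_def d_def disj_commute)
    have "?neg s' = ?neg s - {i, j}" using i j by (auto simp: s'_def d_def)
    then have "card (?neg s') < card (?neg s)" using i by (intro psubset_card_mono) auto
    then have "signed_perm_mat n id s' \<in> H" using less.hyps s' by blast
    moreover have "signed_perm_mat n id d \<in> H"
      unfolding d_def signed_transp_mat_mult_neg[OF i(1) j(1) j(2)[symmetric], symmetric]
      using i j transps by (intro subgroup.m_closed[OF H, simplified]) (auto simp: signed_transps_def)
    moreover have "signed_perm_mat n id s' * signed_perm_mat n id d = signed_perm_mat n id s"
      using i j by (subst signed_perm_mat_mult) (auto simp: s'_def d_def intro!: signed_perm_mat_cong)
    ultimately show ?thesis using subgroup.m_closed[OF H] by fastforce
  qed
qed

lemma even_signed_perms_subset_subgroup: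
  assumes H: "subgroup H (GL_grp n)" and transps: "signed_transps n \<subseteq> H"
  shows "even_signed_perms n \<subseteq> H"
proof
  fix x assume "x \<in> even_signed_perms n"
  then obtain p s where x: "x = signed_perm_mat n p s" and p: "p permutes {..<n}" and s: "s \<in> even_signs n"
    unfolding even_signed_perms_def by auto
  have "signed_perm_mat n p (\<lambda>_. 1) \<in> H"
    using H p transps by (intro perm_mat_in_subgroup) (auto simp: signed_transps_def)
  moreover have "signed_perm_mat n id s \<in> H" using sign_diag_in_subgroup[OF H transps s] .
  moreover have "x = signed_perm_mat n p (\<lambda>_. 1) * signed_perm_mat n id s"
    unfolding x by (subst signed_perm_mat_mult) (auto intro!: signed_perm_mat_cong)
  ultimately show "x \<in> H" using subgroup.m_closed[OF H] by (metis GL_grp_mult)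
qed

lemma generate_signed_transps: "generate (GL_grp n) (signed_transps n) = even_signed_perms n"
proof
  show "generate (GL_grp n) (signed_transps n) \<subseteq> even_signed_perms n"
    using group.generate_subgroup_incl[OF GL_grp_is_group signed_transps_subset even_signed_perms_subgroup] .
  show "even_signed_perms n \<subseteq> generate (GL_grp n) (signed_transps n)"
    using signed_transps_GL
    by (intro even_signed_perms_subset_subgroup group.generate_is_subgroup[OF GL_grp_is_group])
       (auto intro: generate.incl)
qed

lemma carrier_W_D: "carrier (W_D n) = even_signed_perms n"
  by (simp add: W_D_def gen_subgroup_def reflections_roots_D generate_signed_transps)

lemma order_W_D: "0 < n \<Longrightarrow> order (W_D n) = fact n * 2 ^ (n - 1)"
  by (simp add: order_def carrier_W_D card_even_signed_perms)

section \<open>Five generators of W(D_5)\<close>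

lemma transp_mat_in_subgroup_trans:
  assumes H: "subgroup H (GL_grp n)"
    and ab: "signed_transp_mat n a b 1 \<in> H" and bc: "signed_transp_mat n b c 1 \<in> H"
    and "a < n" "b < n" "c < n" "a \<noteq> b" "a \<noteq> c" "b \<noteq> c"
  shows "signed_transp_mat n a c (1 :: real) \<in> H"
proof (rule conjugate_in_subgroup[OF GL_grp_is_group H ab bc])
  show "signed_transp_mat n a c (1 :: real) \<in> carrier (GL_grp n)"
    using assms(4-9) by (intro signed_transp_mat_GL) auto
  have "Transposition.transpose a b permutes {..<n}" using assms by (intro permutes_swap_id) auto
  then show "signed_transp_mat n a b 1 \<otimes>\<^bsub>GL_grp n\<^esub> signed_transp_mat n b c 1
      = signed_transp_mat n a c 1 \<otimes>\<^bsub>GL_grp n\<^esub> signed_transp_mat n a b 1"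
    using signed_transp_mat_conj[of "Transposition.transpose a b" n b c 1] assms
    unfolding signed_transp_mat_one by simp
qed

lemma signed_transps_in_subgroup:
  assumes H: "subgroup H (GL_grp n)"
    and transps: "\<And>a b. a < n \<Longrightarrow> b < n \<Longrightarrow> a \<noteq> b \<Longrightarrow> signed_transp_mat n a b 1 \<in> H"
    and neg: "signed_transp_mat n a b (-1) \<in> H" "a < n" "b < n" "a \<noteq> b"
  shows "signed_transps n \<subseteq> H"
proof -
  have "signed_transp_mat n i j (-1) \<in> H" if ij: "i < n" "j < n" "i \<noteq> j" for i j
  proof -
    obtain p where p: "p permutes {..<n}" "p a = i" "p b = j"
      by (rule permutes_two_points[of a "{..<n}" b i j]) (use ij neg in auto)
    show ?thesis
    proof (rule conjugate_in_subgroup[OF GL_grp_is_group H _ neg(1)])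
      show "signed_perm_mat n p (\<lambda>_. 1) \<in> H" using perm_mat_in_subgroup[OF H transps p(1)] .
      show "signed_transp_mat n i j (-1 :: real) \<in> carrier (GL_grp n)"
        using ij by (intro signed_transp_mat_GL) auto
      show "signed_perm_mat n p (\<lambda>_. 1) \<otimes>\<^bsub>GL_grp n\<^esub> signed_transp_mat n a b (-1)
          = signed_transp_mat n i j (-1) \<otimes>\<^bsub>GL_grp n\<^esub> signed_perm_mat n p (\<lambda>_. 1)"
        using signed_transp_mat_conj[OF p(1), of a b "-1"] p(2,3) neg(2,3) by simp
    qed
  qed
  with transps show ?thesis unfolding signed_transps_def by blast
qed

text \<open>Under \<open>rep7\<close> below, these become the generators (12), (23), (34), (67), A of \<open>G\<^sub>L\<close>.\<close>
definition D5_generators :: "real mat set" where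
  "D5_generators =
    {signed_transp_mat 5 1 2 (-1), signed_transp_mat 5 0 1 1, signed_transp_mat 5 1 2 1,
     signed_transp_mat 5 3 4 1,
     signed_perm_mat 5 (Transposition.transpose 0 3 \<circ> Transposition.transpose 1 2) (\<lambda>_. 1)}"

lemma D5_generators_subset: "D5_generators \<subseteq> even_signed_perms 5"
proof -
  have "signed_transp_mat 5 1 2 (-1) \<in> signed_transps 5" "signed_transp_mat 5 0 1 1 \<in> signed_transps 5"
    "signed_transp_mat 5 1 2 1 \<in> signed_transps 5" "signed_transp_mat 5 3 4 1 \<in> signed_transps 5"
    unfolding signed_transps_def by force+
  moreover have "Transposition.transpose 0 3 \<circ> Transposition.transpose 1 2 permutes {..<5::nat}"
    by (intro permutes_compose permutes_swap_id) auto
  ultimately show ?thesis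
    using signed_transps_subset one_even_signs unfolding D5_generators_def even_signed_perms_def by blast
qed

lemma generate_D5_generators: "generate (GL_grp 5) D5_generators = even_signed_perms 5"
proof
  show "generate (GL_grp 5) D5_generators \<subseteq> even_signed_perms 5"
    using group.generate_subgroup_incl[OF GL_grp_is_group D5_generators_subset even_signed_perms_subgroup] .
next
  let ?H = "generate (GL_grp 5) D5_generators"
  let ?\<tau> = "\<lambda>a b. signed_transp_mat 5 a b (1 :: real)"
  have H: "subgroup ?H (GL_grp 5)"
    using D5_generators_subset subgroup.subset[OF even_signed_perms_subgroup]
    by (intro group.generate_is_subgroup[OF GL_grp_is_group]) blast
  have gens: "?\<tau> 0 1 \<in> ?H" "?\<tau> 1 2 \<in> ?H" "?\<tau> 3 4 \<in> ?H" "signed_transp_mat 5 1 2 (-1) \<in> ?H"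
    and W: "signed_perm_mat 5 (Transposition.transpose 0 3 \<circ> Transposition.transpose 1 2) (\<lambda>_. 1) \<in> ?H"
    unfolding D5_generators_def by (auto intro: generate.incl)
  have "\<forall>c<5. Transposition.transpose 1 2 c < (5::nat)" by (auto simp: transpose_def)
  then have "?\<tau> 0 3 = signed_perm_mat 5 (Transposition.transpose 0 3 \<circ> Transposition.transpose 1 2) (\<lambda>_. 1) * ?\<tau> 1 2"
    unfolding signed_transp_mat_one by (subst signed_perm_mat_mult) (simp_all add: comp_assoc)
  then have \<tau>03: "?\<tau> 0 3 \<in> ?H" using subgroup.m_closed[OF H W gens(2)] by simp
  have \<tau>02: "?\<tau> 0 2 \<in> ?H" by (rule transp_mat_in_subgroup_trans[OF H gens(1,2)]) auto
  have \<tau>04: "?\<tau> 0 4 \<in> ?H" by (rule transp_mat_in_subgroup_trans[OF H \<tau>03 gens(3)]) auto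
  have \<tau>0: "?\<tau> 0 k \<in> ?H" if "0 < k" "k < 5" for k
  proof -
    have "k = 1 \<or> k = 2 \<or> k = 3 \<or> k = 4" using that by auto
    then show ?thesis using gens(1) \<tau>02 \<tau>03 \<tau>04 by auto
  qed
  have transps: "?\<tau> i j \<in> ?H" if ij: "i < 5" "j < 5" "i \<noteq> j" for i j
  proof (cases "i = 0 \<or> j = 0")
    case True
    then show ?thesis
    proof
      assume "i = 0" then show ?thesis using ij \<tau>0[of j] by simp
    next
      assume "j = 0" then show ?thesis using ij \<tau>0[of i] by (simp add: signed_transp_mat_commute[of 5 0 i])
    qed
  next
    case False
    then show ?thesis
      using ij \<tau>0[of i] \<tau>0[of j]
      by (intro transp_mat_in_subgroup_trans[OF H, of i 0 j]) (auto simp: signed_transp_mat_commute[of 5 0 i])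
  qed
  show "even_signed_perms 5 \<subseteq> ?H"
    using signed_transps_in_subgroup[OF H transps gens(4)]
    by (intro even_signed_perms_subset_subgroup[OF H]) auto
qed

section \<open>A faithful 7-dimensional representation of W(D_5)\<close>

definition embed_mat :: "nat \<Rightarrow> real mat \<Rightarrow> complex mat" where
  "embed_mat m A = (let n = dim_row A in
     four_block_mat (map_mat complex_of_real A) (0\<^sub>m n (m - n)) (0\<^sub>m (m - n) n) (1\<^sub>m (m - n)))"

lemma embed_mat_carrier: "A \<in> carrier_mat n n \<Longrightarrow> n \<le> m \<Longrightarrow> embed_mat m A \<in> carrier_mat m m"
proof -
  assume A: "A \<in> carrier_mat n n" and nm: "n \<le> m"
  have "four_block_mat (map_mat complex_of_real A) (0\<^sub>m n (m - n)) (0\<^sub>m (m - n) n) (1\<^sub>m (m - n))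
      \<in> carrier_mat (n + (m - n)) (n + (m - n))"
    using A by (intro four_block_carrier_mat) auto
  then show ?thesis using A nm by (simp add: embed_mat_def)
qed

lemma index_embed_mat:
  assumes "A \<in> carrier_mat n n" "n \<le> m" "i < m" "j < m"
  shows "embed_mat m A $$ (i, j) = (if i < n \<and> j < n then complex_of_real (A $$ (i, j)) else of_bool (i = j))"
  using assms by (simp add: embed_mat_def) linarith

lemma embed_mat_mult:
  assumes A: "A \<in> carrier_mat n n" and B: "B \<in> carrier_mat n n" and "n \<le> m"
  shows "embed_mat m (A * B) = embed_mat m A * embed_mat m B"
  using A B unfolding embed_mat_def Let_def
  by (simp add: mult_four_block_mat[of _ n n _ "m - n" _ "m - n" _ _ n _ "m - n"] of_real_hom.mat_hom_mult)

lemma embed_mat_one: "n \<le> m \<Longrightarrow> embed_mat m (1\<^sub>m n) = 1\<^sub>m m"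
  unfolding embed_mat_def Let_def by (simp add: of_real_hom.mat_hom_one)

lemma embed_mat_inj:
  assumes A: "A \<in> carrier_mat n n" and B: "B \<in> carrier_mat n n" and "n \<le> m"
    and eq: "embed_mat m A = embed_mat m B"
  shows "A = B"
proof (rule eq_matI)
  fix i j assume "i < dim_row B" "j < dim_col B"
  then have ij: "i < n" "j < n" using B by auto
  have "embed_mat m A $$ (i, j) = embed_mat m B $$ (i, j)" using eq by simp
  then show "A $$ (i, j) = B $$ (i, j)"
    using ij assms(3) by (simp add: index_embed_mat[OF A] index_embed_mat[OF B])
qed (use A B in auto)

lemma conj_embed_mat_hom:
  fixes P P' :: "complex mat"
  assumes nm: "n \<le> m" and P: "P \<in> carrier_mat m m" "P' \<in> carrier_mat m m"
    and inv: "P * P' = 1\<^sub>m m" "P' * P = 1\<^sub>m m"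
  shows "(\<lambda>A. P * embed_mat m A * P') \<in> hom (GL_grp n) (GL_grp m)"
    and "inj_on (\<lambda>A. P * embed_mat m A * P') (carrier (GL_grp n))"
proof -
  define h where "h = (\<lambda>A. P * embed_mat m A * P')"
  have h_carrier: "h A \<in> carrier_mat m m" if "A \<in> carrier_mat n n" for A
    using that P nm embed_mat_carrier unfolding h_def by auto
  have h_mult: "h (A * B) = h A * h B" if "A \<in> carrier_mat n n" "B \<in> carrier_mat n n" for A B
  proof -
    have EA: "embed_mat m A \<in> carrier_mat m m" and EB: "embed_mat m B \<in> carrier_mat m m"
      using that nm by (auto intro: embed_mat_carrier)
    have "h A * h B = P * embed_mat m A * (P' * P) * embed_mat m B * P'"
      unfolding h_def using P EA EB by (simp add: assoc_mult_mat[of _ m m _ m _ m])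
    also have "\<dots> = h (A * B)"
      unfolding h_def inv(2) using P EA EB that nm
      by (simp add: embed_mat_mult assoc_mult_mat[of _ m m _ m _ m])
    finally show ?thesis by simp
  qed
  have h_one: "h (1\<^sub>m n) = 1\<^sub>m m"
    unfolding h_def embed_mat_one[OF nm] using P inv by simp
  have hom: "h \<in> hom (GL_grp n) (GL_grp m)"
  proof (rule homI)
    fix A :: "real mat" assume "A \<in> carrier (GL_grp n)"
    then obtain B where A: "A \<in> carrier_mat n n" and B: "B \<in> carrier_mat n n" "B * A = 1\<^sub>m n" "A * B = 1\<^sub>m n"
      unfolding GL_grp_carrier_iff by blast
    show "h A \<in> carrier (GL_grp m)"
      unfolding GL_grp_carrier_iff using A B h_carrier h_mult[symmetric] h_one by metis
  qed (simp add: GL_grp_carrier_iff h_mult)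
  have inj: "inj_on h (carrier (GL_grp n))"
  proof (rule inj_onI)
    fix A B :: "real mat" assume "A \<in> carrier (GL_grp n)" "B \<in> carrier (GL_grp n)" and eq: "h A = h B"
    then have A: "A \<in> carrier_mat n n" and B: "B \<in> carrier_mat n n" by (simp_all add: GL_grp_carrier_iff)
    have "embed_mat m X = P' * h X * P" if "X \<in> carrier_mat n n" for X
    proof -
      have E: "embed_mat m X \<in> carrier_mat m m" using embed_mat_carrier[OF that nm] .
      have "P' * h X * P = (P' * P) * embed_mat m X * (P' * P)"
        unfolding h_def using P E by (simp add: assoc_mult_mat[of _ m m _ m _ m])
      then show ?thesis using inv E by simp
    qed
    then show "A = B" using embed_mat_inj[OF A B nm] eq A B by metis
  qed
  from hom inj show "(\<lambda>A. P * embed_mat m A * P') \<in> hom (GL_grp n) (GL_grp m)"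
    and "inj_on (\<lambda>A. P * embed_mat m A * P') (carrier (GL_grp n))"
    by (simp_all add: h_def)
qed

lemma index_mat_of_rows_list [simp]:
  "i < length rs \<Longrightarrow> j < n \<Longrightarrow> mat_of_rows_list n rs $$ (i, j) = rs ! i ! j"
  and mat_of_rows_list_carrier: "length rs = m \<Longrightarrow> mat_of_rows_list n rs \<in> carrier_mat m n"
  by (simp_all add: mat_of_rows_list_def)

lemma index_mult_mat_7:
  assumes "A \<in> carrier_mat 7 7" "B \<in> carrier_mat 7 7" "i < 7" "j < 7"
  shows "(A * B) $$ (i, j) = A $$ (i, 0) * B $$ (0, j) + A $$ (i, 1) * B $$ (1, j)
    + A $$ (i, 2) * B $$ (2, j) + A $$ (i, 3) * B $$ (3, j) + A $$ (i, 4) * B $$ (4, j)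
    + A $$ (i, 5) * B $$ (5, j) + A $$ (i, 6) * B $$ (6, j)"
  using assms by (simp add: scalar_prod_def eval_nat_numeral atLeast0_lessThan_Suc ac_simps)

lemma mat_eq_7I:
  assumes "A \<in> carrier_mat 7 7" "B \<in> carrier_mat 7 7"
    and "\<forall>i\<in>{0, 1, 2, 3, 4, 5, 6}. \<forall>j\<in>{0, 1, 2, 3, 4, 5, 6}. A $$ (i, j) = B $$ (i, j)"
  shows "A = B"
proof (rule eq_matI)
  fix i j assume "i < dim_row B" "j < dim_col B"
  then have "i \<in> {0, 1, 2, 3, 4, 5, 6}" "j \<in> {0, 1, 2, 3, 4, 5, 6}" using assms(2) by auto
  then show "A $$ (i, j) = B $$ (i, j)" using assms(3) by blast
qed (use assms in auto)

text \<open>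
  The columns of \<open>Q_mat\<close> form a basis of \<open>\<complex>\<^sup>7\<close> in which the generators of \<open>G\<^sub>L\<close> act as
  \<open>diag(W, 1, 1)\<close> for the corresponding W in \<open>D5_generators\<close>; the last two columns are
  fixed by all of \<open>G\<^sub>L\<close>.
\<close>
definition Q_mat :: "complex mat" where
  "Q_mat = mat_of_rows_list 7
    [[ 1,  1,  1, 1, 1, 0, 1],
     [ 1, -1, -1, 1, 1, 0, 1],
     [-1,  1, -1, 1, 1, 0, 1],
     [-1, -1,  1, 1, 1, 0, 1],
     [ 0,  0,  0, 2, 2, 1, 0],
     [ 0,  0,  0, 2, 0, 0, 2],
     [ 0,  0,  0, 0, 2, 0, 2]]"

definition Q_inv :: "complex mat" where
  "Q_inv = mat_of_rows_list 7
    [[ 1/4,  1/4, -1/4, -1/4, 0,    0,    0],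
     [ 1/4, -1/4,  1/4, -1/4, 0,    0,    0],
     [ 1/4, -1/4, -1/4,  1/4, 0,    0,    0],
     [ 1/4,  1/4,  1/4,  1/4, 0,    0, -1/2],
     [ 1/4,  1/4,  1/4,  1/4, 0, -1/2,    0],
     [  -1,   -1,   -1,   -1, 1,    1,    1],
     [-1/4, -1/4, -1/4, -1/4, 0,  1/2,  1/2]]"

lemma Q_mat_carrier: "Q_mat \<in> carrier_mat 7 7"
  and Q_inv_carrier: "Q_inv \<in> carrier_mat 7 7"
  unfolding Q_mat_def Q_inv_def by (simp_all add: mat_of_rows_list_carrier)

lemma Q_mat_Q_inv: "Q_mat * Q_inv = 1\<^sub>m 7"
proof (rule mat_eq_7I)
  show "\<forall>i\<in>{0, 1, 2, 3, 4, 5, 6}. \<forall>j\<in>{0, 1, 2, 3, 4, 5, 6}. (Q_mat * Q_inv) $$ (i, j) = 1\<^sub>m 7 $$ (i, j)"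
    using Q_mat_carrier Q_inv_carrier by (simp add: index_mult_mat_7 del: index_mult_mat) (simp add: Q_mat_def Q_inv_def)
qed (simp_all add: mult_carrier_mat[OF Q_mat_carrier Q_inv_carrier])

lemma Q_inv_Q_mat: "Q_inv * Q_mat = 1\<^sub>m 7"
proof (rule mat_eq_7I)
  show "\<forall>i\<in>{0, 1, 2, 3, 4, 5, 6}. \<forall>j\<in>{0, 1, 2, 3, 4, 5, 6}. (Q_inv * Q_mat) $$ (i, j) = 1\<^sub>m 7 $$ (i, j)"
    using Q_mat_carrier Q_inv_carrier by (simp add: index_mult_mat_7 del: index_mult_mat) (simp add: Q_mat_def Q_inv_def)
qed (simp_all add: mult_carrier_mat[OF Q_inv_carrier Q_mat_carrier])

definition rep7 :: "real mat \<Rightarrow> complex mat" where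
  "rep7 = (\<lambda>A. Q_mat * embed_mat 7 A * Q_inv)"

lemma rep7_hom: "rep7 \<in> hom (GL_grp 5) (GL_grp 7)"
  and rep7_inj: "inj_on rep7 (carrier (GL_grp 5))"
  unfolding rep7_def
  by (rule conj_embed_mat_hom[OF _ Q_mat_carrier Q_inv_carrier Q_mat_Q_inv Q_inv_Q_mat]; simp)+

lemma rep7_eqI:
  assumes L: "L \<in> carrier_mat 7 7" and W: "W \<in> carrier_mat 5 5"
    and "\<forall>i\<in>{0, 1, 2, 3, 4, 5, 6}. \<forall>j\<in>{0, 1, 2, 3, 4, 5, 6}.
      (L * Q_mat) $$ (i, j) = (Q_mat * embed_mat 7 W) $$ (i, j)"
  shows "rep7 W = L"
proof -
  have E: "embed_mat 7 W \<in> carrier_mat 7 7" using embed_mat_carrier[OF W] by simp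
  have "L * Q_mat = Q_mat * embed_mat 7 W"
    using assms E Q_mat_carrier by (intro mat_eq_7I) auto
  then have "rep7 W = L * Q_mat * Q_inv"
    unfolding rep7_def using E Q_mat_carrier Q_inv_carrier by (simp add: assoc_mult_mat[of _ 7 7 _ 7 _ 7])
  also have "\<dots> = L" using L Q_mat_carrier Q_inv_carrier Q_mat_Q_inv by (simp add: assoc_mult_mat[of _ 7 7 _ 7 _ 7])
  finally show ?thesis .
qed

lemma rep7_D5_generators:
  "rep7 ` D5_generators =
    {perm_matrix 7 (Transposition.transpose 0 1), perm_matrix 7 (Transposition.transpose 1 2),
     perm_matrix 7 (Transposition.transpose 2 3), perm_matrix 7 (Transposition.transpose 5 6), A_mat}"
proof -
  have P: "perm_matrix 7 \<sigma> \<in> carrier_mat 7 7" for \<sigma> by (simp add: perm_matrix_def)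
  have A: "A_mat \<in> carrier_mat 7 7" unfolding A_mat_def by (simp add: mat_of_rows_list_carrier)
  note entries = index_mult_mat_7[OF _ Q_mat_carrier] index_mult_mat_7[OF Q_mat_carrier]
    index_embed_mat[OF signed_perm_mat_carrier[of 5]] embed_mat_carrier[OF signed_perm_mat_carrier]
  note defs = perm_matrix_def Q_mat_def A_mat_def signed_transp_mat_def transpose_def
  have "rep7 (signed_transp_mat 5 1 2 (-1)) = perm_matrix 7 (Transposition.transpose 0 1)"
    by (rule rep7_eqI[OF P]) (simp_all add: signed_transp_mat_def entries P del: index_mult_mat, simp add: defs)
  moreover have "rep7 (signed_transp_mat 5 0 1 1) = perm_matrix 7 (Transposition.transpose 1 2)"
    by (rule rep7_eqI[OF P]) (simp_all add: signed_transp_mat_def entries P del: index_mult_mat, simp add: defs)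
  moreover have "rep7 (signed_transp_mat 5 1 2 1) = perm_matrix 7 (Transposition.transpose 2 3)"
    by (rule rep7_eqI[OF P]) (simp_all add: signed_transp_mat_def entries P del: index_mult_mat, simp add: defs)
  moreover have "rep7 (signed_transp_mat 5 3 4 1) = perm_matrix 7 (Transposition.transpose 5 6)"
    by (rule rep7_eqI[OF P]) (simp_all add: signed_transp_mat_def entries P del: index_mult_mat, simp add: defs)
  moreover have "rep7 (signed_perm_mat 5 (Transposition.transpose 0 3 \<circ> Transposition.transpose 1 2) (\<lambda>_. 1)) = A_mat"
    by (rule rep7_eqI[OF A]) (simp_all add: entries A del: index_mult_mat, simp add: defs)
  ultimately show ?thesis by (simp add: D5_generators_def)
qed

theorem theorem4p1:
  shows "G_L \<cong> W_D 5 \<and> order (W_D 5) = 1920"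
proof
  show "order (W_D 5) = 1920" using order_W_D[of 5] by (simp add: fact_numeral)
  have S: "D5_generators \<subseteq> carrier (GL_grp 5)"
    using D5_generators_subset subgroup.subset[OF even_signed_perms_subgroup] by blast
  have W: "W_D 5 = gen_subgroup 5 D5_generators"
    by (simp add: W_D_def gen_subgroup_def reflections_roots_D generate_signed_transps generate_D5_generators)
  have G: "G_L = gen_subgroup 7 (rep7 ` D5_generators)"
    by (simp add: G_L_def rep7_D5_generators)
  have "rep7 \<in> iso (W_D 5) G_L"
    unfolding W G using gen_subgroup_image_iso[OF rep7_hom rep7_inj S] .
  then show "G_L \<cong> W_D 5"
    using group.iso_sym[OF gen_subgroup_is_group[OF S]] is_isoI W by metis
qed

end
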